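(* Let $\mathbb{K}=(G,M,I)$ be a formal context. The number of meet-irreducible elements of the lattice ${\downarrow}\operatorname{Ext}(\mathbb{K})$ of all closure systems on $G$ contained in $\operatorname{Ext}(\mathbb{K})$ (ordered by inclusion) equals the number of covering pairs $A\prec B$ in the lattice $(\operatorname{Ext}(\mathbb{K}),\subseteq)$, i.e. $|\prec_{\operatorname{Ext}(\mathbb{K})}|$.
   Context: A formal context is a triple $(G,M,I)$ with finite nonempty sets $G$, $M$ and $I\subseteq G\times M$; derivations $A'=\{m\mid\forall a\in A:(a,m)\in I\}$, $B'=\{g\mid\forall b\in B:(g,b)\in I\}$. $\operatorname{Ext}(\mathbb{K})=\{A\subseteq G\mid A''=A\}$. A closure system on $G$ is a family of subsets of $G$ containing $G$ and closed under intersections. $\prec_{\operatorname{Ext}(\mathbb{K})}$ is the covering relation of $(\operatorname{Ext}(\mathbb{K}),\subseteq)$. An element $x$ of a lattice is meet-irreducible if $x\neq\top$ and $x=\bigwedge Y$ implies $x\in Y$. *)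

theory Defs
  imports Main
begin

definition formal_context :: "'g set \<Rightarrow> 'm set \<Rightarrow> ('g \<times> 'm) set \<Rightarrow> bool" where
  "formal_context G M I \<longleftrightarrow> finite G \<and> finite M \<and> G \<noteq> {} \<and> M \<noteq> {} \<and> I \<subseteq> G \<times> M"

definition intent :: "'m set \<Rightarrow> ('g \<times> 'm) set \<Rightarrow> 'g set \<Rightarrow> 'm set" where
  "intent M I A = {m \<in> M. \<forall>a\<in>A. (a, m) \<in> I}"

definition extent :: "'g set \<Rightarrow> ('g \<times> 'm) set \<Rightarrow> 'm set \<Rightarrow> 'g set" where
  "extent G I B = {g \<in> G. \<forall>b\<in>B. (g, b) \<in> I}"

definition Ext :: "'g set \<Rightarrow> 'm set \<Rightarrow> ('g \<times> 'm) set \<Rightarrow> 'g set set" where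
  "Ext G M I = {A. A \<subseteq> G \<and> extent G I (intent M I A) = A}"

definition closure_system :: "'g set \<Rightarrow> 'g set set \<Rightarrow> bool" where
  "closure_system G F \<longleftrightarrow> F \<subseteq> Pow G \<and> G \<in> F \<and> (\<forall>S. S \<subseteq> F \<and> S \<noteq> {} \<longrightarrow> \<Inter>S \<in> F)"

definition down_closure_systems :: "'g set \<Rightarrow> 'g set set \<Rightarrow> 'g set set set" where
  "down_closure_systems G E = {F. closure_system G F \<and> F \<subseteq> E}"

definition is_glb :: "'a set set \<Rightarrow> 'a set set \<Rightarrow> 'a set \<Rightarrow> bool" where
  "is_glb L Y x \<longleftrightarrow> x \<in> L \<and> (\<forall>y\<in>Y. x \<subseteq> y) \<and> (\<forall>z\<in>L. (\<forall>y\<in>Y. z \<subseteq> y) \<longrightarrow> z \<subseteq> x)"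

definition meet_irreducible :: "'a set set \<Rightarrow> 'a set \<Rightarrow> bool" where
  "meet_irreducible L x \<longleftrightarrow> x \<in> L \<and> \<not> (\<forall>y\<in>L. y \<subseteq> x) \<and>
     (\<forall>Y. Y \<subseteq> L \<and> is_glb L Y x \<longrightarrow> x \<in> Y)"

definition covers :: "'a set set \<Rightarrow> ('a set \<times> 'a set) set" where
  "covers L = {(A, B). A \<in> L \<and> B \<in> L \<and> A \<subset> B \<and> \<not> (\<exists>C\<in>L. A \<subset> C \<and> C \<subset> B)}"

end

theory Submission
  imports Defs
begin

text \<open>For a covering pair \<open>A \<prec> B\<close> of a closure system \<open>E\<close>, the members of \<open>E\<close> respecting
  the implication \<open>A \<rightarrow> B\<close>, \<open>F\<^sub>A\<^sub>B = {C \<in> E. A \<subseteq> C \<longrightarrow> B \<subseteq> C}\<close>, form a closure system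
  contained in \<open>E\<close> and missing \<open>A\<close>. Any closure system \<open>F \<subseteq> E\<close> containing \<open>F\<^sub>A\<^sub>B\<close> but
  not \<open>A\<close> is \<open>F\<^sub>A\<^sub>B\<close> itself: for \<open>C \<in> F\<close> with \<open>A \<subseteq> C\<close> the set \<open>C \<inter> B\<close> lies in \<open>F\<close>, hence
  differs from \<open>A\<close>, and lies between \<open>A\<close> and \<open>B\<close>, so it is \<open>B\<close>. This makes \<open>F\<^sub>A\<^sub>B\<close>
  meet-irreducible. Conversely, for finite \<open>G\<close> every closure system \<open>F \<subseteq> E\<close> is the meet of
  the \<open>F\<^sub>A\<^sub>B\<close> above it: a member \<open>X\<close> of \<open>E\<close> outside \<open>F\<close> lies strictly below its
  \<open>F\<close>-closure, and a cover \<open>X \<prec> B\<close> below that closure gives \<open>F \<subseteq> F\<^sub>X\<^sub>B\<close> with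
  \<open>X \<notin> F\<^sub>X\<^sub>B\<close>. Hence \<open>(A, B) \<mapsto> F\<^sub>A\<^sub>B\<close> is a bijection from the covering pairs of \<open>E\<close>
  onto the meet-irreducible closure systems below \<open>E\<close>.\<close>

lemma closure_system_Inter_mem:
  assumes "closure_system G F" and "S \<subseteq> F" and "S \<noteq> {}"
  shows "\<Inter>S \<in> F"
  using assms unfolding closure_system_def by blast

lemma closure_system_Int:
  assumes "closure_system G F" and "C \<in> F" and "D \<in> F"
  shows "C \<inter> D \<in> F"
  using closure_system_Inter_mem[of G F "{C, D}"] assms by simp

lemma finite_closure_system:
  assumes "closure_system G E" and "finite G"
  shows "finite E"
  using assms unfolding closure_system_def by (meson finite_Pow_iff finite_subset)

lemma closure_system_Inter:
  assumes "\<And>F. F \<in> Y \<Longrightarrow> closure_system G F" and "Y \<noteq> {}"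
  shows "closure_system G (\<Inter>Y)"
  unfolding closure_system_def
proof (intro conjI allI impI)
  obtain F where "F \<in> Y"
    using assms(2) by blast
  then show "\<Inter>Y \<subseteq> Pow G"
    using assms(1) unfolding closure_system_def by blast
  show "G \<in> \<Inter>Y"
    using assms(1) unfolding closure_system_def by blast
  show "\<Inter>S \<in> \<Inter>Y" if "S \<subseteq> \<Inter>Y \<and> S \<noteq> {}" for S
    using that assms(1) closure_system_Inter_mem by blast
qed

lemma Inter_in_down_closure_systems:
  assumes "Y \<subseteq> down_closure_systems G E" and "Y \<noteq> {}"
  shows "\<Inter>Y \<in> down_closure_systems G E"
  using assms closure_system_Inter[of Y G]
  by (auto simp: down_closure_systems_def)

lemma closure_system_Ext: "closure_system G (Ext G M I)"
  unfolding closure_system_def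
proof (intro conjI allI impI)
  show "Ext G M I \<subseteq> Pow G" "G \<in> Ext G M I"
    by (auto simp: Ext_def extent_def intent_def)
next
  fix S assume S: "S \<subseteq> Ext G M I \<and> S \<noteq> {}"
  have "extent G I (intent M I (\<Inter>S)) \<subseteq> A" if "A \<in> S" for A
  proof -
    have "intent M I A \<subseteq> intent M I (\<Inter>S)"
      using that by (auto simp: intent_def)
    then have "extent G I (intent M I (\<Inter>S)) \<subseteq> extent G I (intent M I A)"
      by (auto simp: extent_def)
    also have "\<dots> = A"
      using that S by (auto simp: Ext_def)
    finally show ?thesis .
  qed
  moreover have "\<Inter>S \<subseteq> G"
    using S by (auto simp: Ext_def)
  ultimately show "\<Inter>S \<in> Ext G M I"
    unfolding Ext_def by (auto simp: extent_def intent_def)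
qed

lemma covers_between_eq:
  assumes "(A, B) \<in> covers E" and "C \<in> E" and "A \<subseteq> C" and "C \<subset> B"
  shows "C = A"
  using assms unfolding covers_def by blast

lemma exists_cover_below:
  assumes "finite E" and "X \<in> E" and "X' \<in> E" and "X \<subset> X'"
  obtains B where "(X, B) \<in> covers E" and "B \<subseteq> X'"
proof -
  define S where "S = {C \<in> E. X \<subset> C \<and> C \<subseteq> X'}"
  have "finite S"
    using assms(1) by (simp add: S_def)
  moreover have "S \<noteq> {}"
    using assms(3,4) by (auto simp: S_def)
  ultimately have "\<exists>B \<in> S. \<forall>C \<in> S. C \<subseteq> B \<longrightarrow> B = C"
    by (rule finite_has_minimal)
  then obtain B where "B \<in> S" and minimal: "\<And>C. C \<in> S \<Longrightarrow> C \<subseteq> B \<Longrightarrow> B = C"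
    by blast
  then have "B \<in> E" "X \<subset> B" "B \<subseteq> X'"
    by (simp_all add: S_def)
  have "\<not> (\<exists>C \<in> E. X \<subset> C \<and> C \<subset> B)"
  proof
    assume "\<exists>C \<in> E. X \<subset> C \<and> C \<subset> B"
    then obtain C where "C \<in> E" "X \<subset> C" "C \<subset> B"
      by blast
    with \<open>B \<subseteq> X'\<close> have "C \<in> S"
      by (auto simp: S_def)
    with minimal \<open>C \<subset> B\<close> show False
      by blast
  qed
  with \<open>X \<in> E\<close> \<open>B \<in> E\<close> \<open>X \<subset> B\<close> have "(X, B) \<in> covers E"
    by (simp add: covers_def)
  then show thesis
    using \<open>B \<subseteq> X'\<close> by (rule that)
qed

definition respecting :: "'a set set \<Rightarrow> 'a set \<Rightarrow> 'a set \<Rightarrow> 'a set set" where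
  "respecting E A B = {C \<in> E. A \<subseteq> C \<longrightarrow> B \<subseteq> C}"

lemma closure_system_respecting:
  assumes "closure_system G E" and "B \<subseteq> G"
  shows "closure_system G (respecting E A B)"
  unfolding closure_system_def
proof (intro conjI allI impI)
  show "respecting E A B \<subseteq> Pow G" "G \<in> respecting E A B"
    using assms unfolding closure_system_def respecting_def by auto
  show "\<Inter>S \<in> respecting E A B" if S: "S \<subseteq> respecting E A B \<and> S \<noteq> {}" for S
  proof -
    have "\<Inter>S \<in> E"
      using S assms(1) unfolding closure_system_def respecting_def by blast
    moreover have "A \<subseteq> \<Inter>S \<longrightarrow> B \<subseteq> \<Inter>S"
      using S unfolding respecting_def by blast
    ultimately show ?thesis
      by (simp add: respecting_def)
  qed
qed

lemma respecting_cover_left_notin: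
  assumes "(A, B) \<in> covers E"
  shows "A \<notin> respecting E A B"
  using assms by (auto simp: covers_def respecting_def)

lemma respecting_cover_right_mem:
  assumes "(A, B) \<in> covers E"
  shows "B \<in> respecting E A B"
  using assms by (auto simp: covers_def respecting_def)

lemma respecting_in_down_closure_systems:
  assumes E: "closure_system G E" and cover: "(A, B) \<in> covers E"
  shows "respecting E A B \<in> down_closure_systems G E"
proof -
  have "B \<in> E" "E \<subseteq> Pow G"
    using E cover by (auto simp: closure_system_def covers_def)
  then have "closure_system G (respecting E A B)"
    using closure_system_respecting[OF E] by blast
  moreover have "respecting E A B \<subseteq> E"
    by (auto simp: respecting_def)
  ultimately show ?thesis
    by (simp add: down_closure_systems_def)
qed

lemma closure_system_subset_respecting_cover:
  assumes F: "closure_system G F" "F \<subseteq> E" and cover: "(A, B) \<in> covers E"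
    and "B \<in> F" and "A \<notin> F"
  shows "F \<subseteq> respecting E A B"
proof
  fix C assume "C \<in> F"
  show "C \<in> respecting E A B"
  proof (rule ccontr)
    assume "C \<notin> respecting E A B"
    with \<open>C \<in> F\<close> F(2) have "A \<subseteq> C" "\<not> B \<subseteq> C"
      unfolding respecting_def by blast+
    have "C \<inter> B \<in> F"
      using F(1) \<open>C \<in> F\<close> \<open>B \<in> F\<close> by (rule closure_system_Int)
    moreover have "A \<subseteq> B"
      using cover by (auto simp: covers_def)
    with \<open>A \<subseteq> C\<close> \<open>\<not> B \<subseteq> C\<close> have "A \<subseteq> C \<inter> B" "C \<inter> B \<subset> B"
      by auto
    ultimately have "C \<inter> B = A"
      using covers_between_eq[OF cover] F(2) by blast
    with \<open>C \<inter> B \<in> F\<close> show False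
      using \<open>A \<notin> F\<close> by simp
  qed
qed

lemma meet_irreducible_respecting_cover:
  assumes E: "closure_system G E" and cover: "(A, B) \<in> covers E"
  shows "meet_irreducible (down_closure_systems G E) (respecting E A B)"
proof -
  let ?L = "down_closure_systems G E" and ?F = "respecting E A B"
  have "E \<in> ?L"
    using E by (simp add: down_closure_systems_def)
  have "A \<in> E"
    using cover by (simp add: covers_def)
  have "A \<notin> ?F"
    using cover by (rule respecting_cover_left_notin)
  have "B \<in> ?F"
    using cover by (rule respecting_cover_right_mem)
  have "?F \<in> Y" if Y: "Y \<subseteq> ?L" "is_glb ?L Y ?F" for Y
  proof (cases "Y = {}")
    case True
    with Y \<open>E \<in> ?L\<close> \<open>A \<in> E\<close> \<open>A \<notin> ?F\<close> show ?thesis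
      unfolding is_glb_def by blast
  next
    case False
    with Y have "\<Inter>Y \<subseteq> ?F"
      using Inter_in_down_closure_systems unfolding is_glb_def by (metis Inter_lower)
    with \<open>A \<notin> ?F\<close> obtain F where "F \<in> Y" "A \<notin> F"
      by blast
    with Y have "?F \<subseteq> F" "closure_system G F" "F \<subseteq> E"
      by (auto simp: is_glb_def down_closure_systems_def)
    with \<open>B \<in> ?F\<close> \<open>A \<notin> F\<close> cover have "F = ?F"
      using closure_system_subset_respecting_cover by blast
    with \<open>F \<in> Y\<close> show ?thesis
      by simp
  qed
  with \<open>E \<in> ?L\<close> \<open>A \<in> E\<close> \<open>A \<notin> ?F\<close> respecting_in_down_closure_systems[OF E cover] show ?thesis
    unfolding meet_irreducible_def by blast
qed

lemma exists_cover_respected: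
  assumes E: "closure_system G E" "finite G" and F: "F \<in> down_closure_systems G E"
    and "X \<in> E" "X \<notin> F"
  obtains B where "(X, B) \<in> covers E" and "F \<subseteq> respecting E X B"
proof -
  have "closure_system G F" "F \<subseteq> E"
    using F by (simp_all add: down_closure_systems_def)
  define X' where "X' = \<Inter>{C \<in> F. X \<subseteq> C}"
  have "G \<in> F" "X \<subseteq> G"
    using \<open>closure_system G F\<close> E(1) \<open>X \<in> E\<close> by (auto simp: closure_system_def)
  then have "X' \<in> F"
    unfolding X'_def using \<open>closure_system G F\<close> by (intro closure_system_Inter_mem) auto
  moreover have "X \<subseteq> X'"
    unfolding X'_def by blast
  ultimately have "X \<subset> X'" "X' \<in> E"
    using \<open>X \<notin> F\<close> \<open>F \<subseteq> E\<close> by auto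
  then obtain B where B: "(X, B) \<in> covers E" "B \<subseteq> X'"
    using exists_cover_below[OF finite_closure_system[OF E] \<open>X \<in> E\<close>] by blast
  have "F \<subseteq> respecting E X B"
  proof
    fix C assume "C \<in> F"
    then have "X \<subseteq> C \<longrightarrow> X' \<subseteq> C"
      unfolding X'_def by blast
    with \<open>C \<in> F\<close> \<open>F \<subseteq> E\<close> \<open>B \<subseteq> X'\<close> show "C \<in> respecting E X B"
      unfolding respecting_def by blast
  qed
  with B(1) show thesis
    by (rule that)
qed

lemma is_glb_respecting_covers:
  assumes E: "closure_system G E" "finite G" and F: "F \<in> down_closure_systems G E"
  shows "is_glb (down_closure_systems G E)
           {respecting E A B | A B. (A, B) \<in> covers E \<and> F \<subseteq> respecting E A B} F"
  unfolding is_glb_def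
proof (intro conjI ballI impI subsetI)
  fix Z C
  assume "Z \<in> down_closure_systems G E" and C: "C \<in> Z"
    and Z: "\<forall>y \<in> {respecting E A B | A B. (A, B) \<in> covers E \<and> F \<subseteq> respecting E A B}. Z \<subseteq> y"
  then have "C \<in> E"
    by (auto simp: down_closure_systems_def)
  show "C \<in> F"
  proof (rule ccontr)
    assume "C \<notin> F"
    with E F \<open>C \<in> E\<close> obtain B where "(C, B) \<in> covers E" "F \<subseteq> respecting E C B"
      by (rule exists_cover_respected)
    with Z C have "C \<in> respecting E C B"
      by blast
    with \<open>(C, B) \<in> covers E\<close> show False
      by (auto simp: covers_def respecting_def)
  qed
qed (use F in auto)

lemma meet_irreducible_obtains_cover:
  assumes E: "closure_system G E" "finite G"
    and "meet_irreducible (down_closure_systems G E) F"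
  obtains A B where "(A, B) \<in> covers E" and "F = respecting E A B"
proof -
  let ?Y = "{respecting E A B | A B. (A, B) \<in> covers E \<and> F \<subseteq> respecting E A B}"
  have "F \<in> down_closure_systems G E"
    using assms(3) by (simp add: meet_irreducible_def)
  then have "is_glb (down_closure_systems G E) ?Y F"
    by (rule is_glb_respecting_covers[OF E])
  moreover have "?Y \<subseteq> down_closure_systems G E"
    using respecting_in_down_closure_systems[OF E(1)] by blast
  ultimately have "F \<in> ?Y"
    using assms(3) unfolding meet_irreducible_def by blast
  with that show thesis
    by blast
qed

lemma inj_on_respecting_covers: "inj_on (\<lambda>(A, B). respecting E A B) (covers E)"
proof (intro inj_onI, clarify)
  fix A B A' B'
  assume cover: "(A, B) \<in> covers E" "(A', B') \<in> covers E"
    and eq: "respecting E A B = respecting E A' B'"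
  have "A \<notin> respecting E A' B'" "A' \<notin> respecting E A B"
    using cover eq respecting_cover_left_notin by metis+
  with cover have "A' \<subseteq> A" "A \<subseteq> A'"
    by (auto simp: respecting_def covers_def)
  then have "A = A'"
    by blast
  have "B \<in> respecting E A' B'" "B' \<in> respecting E A B"
    using cover eq respecting_cover_right_mem by metis+
  with cover \<open>A = A'\<close> have "B' \<subseteq> B" "B \<subseteq> B'"
    by (auto simp: respecting_def covers_def)
  with \<open>A = A'\<close> show "A = A' \<and> B = B'"
    by blast
qed

theorem card_meet_irreducible_down_closure_systems:
  assumes "closure_system G E" and "finite G"
  shows "card {F. meet_irreducible (down_closure_systems G E) F} = card (covers E)"
proof -
  let ?f = "\<lambda>(A, B). respecting E A B"
  have "?f ` covers E = {F. meet_irreducible (down_closure_systems G E) F}"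
  proof (intro equalityI subsetI)
    fix F assume "F \<in> ?f ` covers E"
    then obtain A B where "(A, B) \<in> covers E" "F = respecting E A B"
      by auto
    then show "F \<in> {F. meet_irreducible (down_closure_systems G E) F}"
      using meet_irreducible_respecting_cover[OF assms(1)] by simp
  next
    fix F assume "F \<in> {F. meet_irreducible (down_closure_systems G E) F}"
    then obtain A B where "(A, B) \<in> covers E" "F = respecting E A B"
      using meet_irreducible_obtains_cover[OF assms] by blast
    then show "F \<in> ?f ` covers E"
      by (auto simp: image_iff)
  qed
  then have "bij_betw ?f (covers E) {F. meet_irreducible (down_closure_systems G E) F}"
    using inj_on_respecting_covers by (rule bij_betw_imageI[rotated])
  then show ?thesis
    by (rule bij_betw_same_card[symmetric])
qed

theorem proposition6:
  fixes G :: "'g set" and M :: "'m set" and I :: "('g \<times> 'm) set"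
  assumes "formal_context G M I"
  shows "card {F. meet_irreducible (down_closure_systems G (Ext G M I)) F}
         = card (covers (Ext G M I))"
  using assms closure_system_Ext card_meet_irreducible_down_closure_systems
  unfolding formal_context_def by blast

end
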